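(* For every integer $n\ge 2$, the set of lower accumulation points for $n$ runners contains $\mathcal{S}(n-1)$.
   Context: For a real number $x$, $\Vert x\Vert$ denotes the distance from $x$ to the nearest integer. For positive integers $v_1,\ldots,v_n$, $\mathrm{ML}(v_1,\ldots,v_n)=\max_{t\in\mathbb{R}}\min_{1\le i\le n}\Vert t v_i\Vert$. Let $\mathcal{S}(n)=\{\mathrm{ML}(v_1,\ldots,v_n): v_1,\ldots,v_n \text{ positive integers}\}$. A real number $A$ is a lower accumulation point for $n$ runners if $\mathcal{S}(n)$ contains a sequence of elements strictly less than $A$ converging to $A$. *)

theory Defs
  imports "HOL-Analysis.Analysis"
begin

definition dist_int :: "real \<Rightarrow> real" where
  "dist_int x = \<bar>x - of_int (round x)\<bar>"

text \<open>ML(v_1,...,v_n) = max over t of min_i ||t v_i||; speeds indexed 1..n.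
  The maximum is attained, so it is rendered as the supremum.\<close>
definition lonely_ML :: "nat \<Rightarrow> (nat \<Rightarrow> nat) \<Rightarrow> real" where
  "lonely_ML n v = (SUP t::real. Min ((\<lambda>i. dist_int (t * real (v i))) ` {1..n}))"

definition S :: "nat \<Rightarrow> real set" where
  "S n = {lonely_ML n v | v. \<forall>i\<in>{1..n}. 0 < v i}"

definition lower_acc_point :: "nat \<Rightarrow> real \<Rightarrow> bool" where
  "lower_acc_point n A \<longleftrightarrow>
     (\<exists>x :: nat \<Rightarrow> real. (\<forall>k. x k \<in> S n \<and> x k < A) \<and> x \<longlonglongrightarrow> A)"

end

theory Submission
  imports Defs
begin

(*
  Let v_1, ..., v_m have ML(v) = A and add a runner of speed w_k = (k + 1) D, where
  D = \<Prod>_{i,j} (v_i + v_j). At any time t with min_i ||t v_i|| = A, either A = 1/2 or some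
  runner sits at +A and another at -A modulo 1: otherwise shifting t slightly in the right
  direction moves every runner at distance exactly A further away, contradicting maximality.
  So t (v_i + v_j) is an integer for some i, j, hence t w_k is an integer and the new runner is
  at the origin. As the maximum over t is attained (by continuity and periodicity),
  ML(v, w_k) < A. Conversely, moving a maximizer by at most 1/w_k so that the new runner is
  at 1/2 costs at most (\<Sum>_i v_i) / w_k, so ML(v, w_k) tends to A.
*)

lemma dist_int_nonneg: "0 \<le> dist_int x"
  unfolding dist_int_def by simp

lemma dist_int_le_half: "dist_int x \<le> 1/2"
  unfolding dist_int_def using of_int_round_abs_le[of x] by linarith

lemma dist_int_le: "dist_int x \<le> \<bar>x - of_int k\<bar>"
  unfolding dist_int_def by (rule round_diff_minimal)

lemma dist_int_eqI:
  assumes "\<bar>x - of_int k\<bar> \<le> 1/2"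
  shows "dist_int x = \<bar>x - of_int k\<bar>"
proof -
  have "\<bar>x - of_int k\<bar> \<le> \<bar>x - of_int (round x)\<bar>"
  proof (cases "round x = k")
    case False
    then have "1 \<le> \<bar>of_int (round x - k) :: real\<bar>"
      by (metis of_int_1_le_iff of_int_abs zero_less_abs_iff right_minus_eq int_one_le_iff_zero_less)
    then show ?thesis using assms by linarith
  qed simp
  then show ?thesis using dist_int_le[of x k] unfolding dist_int_def by linarith
qed

lemma dist_int_of_int: "dist_int (of_int k) = 0"
  unfolding dist_int_def by simp

lemma dist_int_add_of_int: "dist_int (x + of_int k) = dist_int x"
proof -
  have "round (x + of_int k) = round x + k"
    unfolding round_def by (metis add.commute add.left_commute floor_add_int)
  then show ?thesis unfolding dist_int_def by simp
qed

lemma dist_int_pos: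
  assumes "0 < x" "x < 1"
  shows "0 < dist_int x"
proof -
  have "x \<noteq> of_int (round x)"
  proof
    assume "x = of_int (round x)"
    with assms have "0 < round x" "round x < 1"
      by (metis of_int_0_less_iff, metis of_int_less_1_iff)
    then show False by simp
  qed
  then show ?thesis unfolding dist_int_def by simp
qed

lemma lipschitz_dist_int: "1-lipschitz_on UNIV dist_int"
proof (rule lipschitz_onI)
  fix x y :: real
  have "dist_int x \<le> \<bar>x - y\<bar> + dist_int y" for x y
    using dist_int_le[of x "round y"] unfolding dist_int_def by linarith
  from this[of x y] this[of y x] show "dist (dist_int x) (dist_int y) \<le> 1 * dist x y"
    unfolding dist_real_def by (simp add: abs_minus_commute abs_le_iff)
qed simp

definition runner_min_dist :: "nat \<Rightarrow> (nat \<Rightarrow> nat) \<Rightarrow> real \<Rightarrow> real" where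
  "runner_min_dist m v t = Min ((\<lambda>i. dist_int (t * real (v i))) ` {1..m})"

lemma runner_min_dist_le: "i \<in> {1..m} \<Longrightarrow> runner_min_dist m v t \<le> dist_int (t * real (v i))"
  unfolding runner_min_dist_def by (rule Min_le) auto

lemma le_runner_min_dist_iff:
  "m \<ge> 1 \<Longrightarrow> c \<le> runner_min_dist m v t \<longleftrightarrow> (\<forall>i\<in>{1..m}. c \<le> dist_int (t * real (v i)))"
  unfolding runner_min_dist_def by (subst Min_ge_iff) auto

lemma less_runner_min_dist_iff:
  "m \<ge> 1 \<Longrightarrow> c < runner_min_dist m v t \<longleftrightarrow> (\<forall>i\<in>{1..m}. c < dist_int (t * real (v i)))"
  unfolding runner_min_dist_def by (subst Min_gr_iff) auto

lemma runner_min_dist_nonneg: "m \<ge> 1 \<Longrightarrow> 0 \<le> runner_min_dist m v t"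
  by (simp add: le_runner_min_dist_iff dist_int_nonneg)

lemma runner_min_dist_le_half: "m \<ge> 1 \<Longrightarrow> runner_min_dist m v t \<le> 1/2"
  using runner_min_dist_le[of 1 m v t] dist_int_le_half[of "t * real (v 1)"] by simp

lemma runner_min_dist_add_of_int: "runner_min_dist m v (t + of_int k) = runner_min_dist m v t"
proof -
  have "dist_int ((t + of_int k) * real (v i)) = dist_int (t * real (v i))" for i
    using dist_int_add_of_int[of "t * real (v i)" "k * int (v i)"] by (simp add: algebra_simps)
  then show ?thesis unfolding runner_min_dist_def by simp
qed

lemma runner_min_dist_Suc:
  assumes "m \<ge> 1"
  shows "runner_min_dist (Suc m) (v(Suc m := w)) t = min (runner_min_dist m v t) (dist_int (t * real w))"
proof -
  have "{1..Suc m} = insert (Suc m) {1..m}" by auto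
  moreover have "(\<lambda>i. dist_int (t * real ((v(Suc m := w)) i))) ` {1..m} =
      (\<lambda>i. dist_int (t * real (v i))) ` {1..m}"
    by (intro image_cong) auto
  ultimately show ?thesis unfolding runner_min_dist_def using assms by (simp add: min.commute)
qed

lemma lipschitz_runner_min_dist:
  assumes "m \<ge> 1"
  shows "(\<Sum>i\<in>{1..m}. real (v i))-lipschitz_on UNIV (runner_min_dist m v)"
proof -
  define L where "L = (\<Sum>i\<in>{1..m}. real (v i))"
  have one_sided: "runner_min_dist m v s - L * \<bar>s - t\<bar> \<le> runner_min_dist m v t" for s t
    unfolding le_runner_min_dist_iff[OF assms]
  proof
    fix i assume i: "i \<in> {1..m}"
    have "dist_int (s * real (v i)) \<le> dist_int (t * real (v i)) + \<bar>s * real (v i) - t * real (v i)\<bar>"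
      using lipschitz_onD[OF lipschitz_dist_int, of "s * real (v i)" "t * real (v i)"]
      by (simp add: dist_real_def)
    also have "\<bar>s * real (v i) - t * real (v i)\<bar> = real (v i) * \<bar>s - t\<bar>"
      by (simp add: abs_mult left_diff_distrib[symmetric])
    also have "\<dots> \<le> L * \<bar>s - t\<bar>"
      unfolding L_def using i by (intro mult_right_mono member_le_sum) auto
    finally show "runner_min_dist m v s - L * \<bar>s - t\<bar> \<le> dist_int (t * real (v i))"
      using runner_min_dist_le[OF i, of v s] by linarith
  qed
  have "L-lipschitz_on UNIV (runner_min_dist m v)"
  proof (rule lipschitz_onI)
    show "dist (runner_min_dist m v s) (runner_min_dist m v t) \<le> L * dist s t" for s t
      using one_sided[of s t] one_sided[of t s]
      unfolding dist_real_def abs_le_iff by (simp add: abs_minus_commute)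
    show "0 \<le> L" unfolding L_def by (simp add: sum_nonneg)
  qed
  then show ?thesis unfolding L_def .
qed

lemma periodic_continuous_attains_sup:
  fixes f :: "real \<Rightarrow> real"
  assumes "continuous_on UNIV f" and periodic: "\<And>t k. f (t + of_int k) = f t"
  obtains t where "\<And>s. f s \<le> f t"
proof -
  obtain t where t: "\<forall>s\<in>{0..1}. f s \<le> f t"
    using continuous_attains_sup[of "{0..1}" f] continuous_on_subset[OF assms(1), of "{0..1}"]
    by auto
  have "f s \<le> f t" for s
  proof -
    have "f s = f (s + of_int (- \<lfloor>s\<rfloor>))" by (rule periodic[symmetric])
    also have "\<dots> \<le> f t"
    proof (rule bspec[OF t])
      show "s + of_int (- \<lfloor>s\<rfloor>) \<in> {0..1}"
        unfolding atLeastAtMost_iff using floor_correct[of s] by linarith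
    qed
    finally show ?thesis .
  qed
  then show thesis by (rule that)
qed

lemma runner_min_dist_le_lonely_ML:
  assumes "m \<ge> 1"
  shows "runner_min_dist m v t \<le> lonely_ML m v"
  unfolding lonely_ML_def runner_min_dist_def[symmetric]
  by (intro cSUP_upper bdd_aboveI[of _ "1/2"]) (use runner_min_dist_le_half[OF assms] in auto)

lemma lonely_ML_attained:
  assumes "m \<ge> 1"
  obtains t where "runner_min_dist m v t = lonely_ML m v"
proof -
  obtain t where "\<And>s. runner_min_dist m v s \<le> runner_min_dist m v t"
    using periodic_continuous_attains_sup[OF lipschitz_on_continuous_on[OF lipschitz_runner_min_dist[OF assms]]]
      runner_min_dist_add_of_int by blast
  then have "lonely_ML m v = runner_min_dist m v t"
    unfolding lonely_ML_def runner_min_dist_def[symmetric] by (intro cSup_eq_maximum) auto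
  then show thesis using that by simp
qed

lemma lonely_ML_pos:
  assumes "m \<ge> 1" and pos: "\<forall>i\<in>{1..m}. 0 < v i"
  shows "0 < lonely_ML m v"
proof -
  define t where "t = 1 / (1 + (\<Sum>i\<in>{1..m}. real (v i)))"
  have "0 < runner_min_dist m v t"
    unfolding less_runner_min_dist_iff[OF assms(1)]
  proof
    fix i assume i: "i \<in> {1..m}"
    have "real (v i) \<le> (\<Sum>i\<in>{1..m}. real (v i))"
      using i by (intro member_le_sum) auto
    then show "0 < dist_int (t * real (v i))"
      using pos i by (intro dist_int_pos) (auto simp: t_def field_simps)
  qed
  then show ?thesis using runner_min_dist_le_lonely_ML[OF assms(1)] by (rule less_le_trans)
qed

lemma isCont_dist_int: "isCont dist_int x"
  using lipschitz_on_continuous_on[OF lipschitz_dist_int] by (simp add: continuous_on_eq_continuous_at)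

lemma eventually_dist_int_gt_shift:
  assumes "0 \<le> A" "A < 1/2" "0 < c" "\<bar>\<sigma>\<bar> = 1" and offset: "x - of_int (round x) = \<sigma> * A"
  shows "\<forall>\<^sub>F s in at_right 0. A < dist_int (x + \<sigma> * (c * s))"
proof -
  have "\<forall>\<^sub>F s in at_right 0. s \<in> {0<..<(1/2 - A) / c}"
    using assms by (intro eventually_at_right_real) simp
  then show ?thesis
  proof (rule eventually_mono)
    fix s assume "s \<in> {0<..<(1/2 - A) / c}"
    then have cs: "0 < c * s" "c * s < 1/2 - A" using assms by (auto simp: field_simps)
    have "x + \<sigma> * (c * s) - of_int (round x) = \<sigma> * (A + c * s)"
      using offset by (simp add: algebra_simps)
    then have "\<bar>x + \<sigma> * (c * s) - of_int (round x)\<bar> = A + c * s"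
      using assms cs by (simp add: abs_mult)
    then have "dist_int (x + \<sigma> * (c * s)) = A + c * s"
      using cs by (subst dist_int_eqI[of _ "round x"]) auto
    then show "A < dist_int (x + \<sigma> * (c * s))" using cs by simp
  qed
qed

lemma exists_runner_min_dist_gt:
  assumes m: "m \<ge> 1" and pos: "\<forall>i\<in>{1..m}. 0 < v i"
    and "0 \<le> A" "A < 1/2" "\<bar>\<sigma>\<bar> = 1"
    and one_sided: "\<forall>i\<in>{1..m}. A < dist_int (t * real (v i)) \<or>
      t * real (v i) - of_int (round (t * real (v i))) = \<sigma> * A"
  shows "\<exists>t'. A < runner_min_dist m v t'"
proof -
  have "\<forall>\<^sub>F s in at_right 0. A < dist_int ((t + \<sigma> * s) * real (v i))" if i: "i \<in> {1..m}" for i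
  proof (cases "A < dist_int (t * real (v i))")
    case True
    have "((\<lambda>s. dist_int ((t + \<sigma> * s) * real (v i))) \<longlongrightarrow> dist_int ((t + \<sigma> * 0) * real (v i)))
        (at_right 0)"
      by (intro isCont_tendsto_compose[OF isCont_dist_int] tendsto_intros)
    then show ?thesis using True by (auto dest: order_tendstoD(1))
  next
    case False
    have "(t + \<sigma> * s) * real (v i) = t * real (v i) + \<sigma> * (real (v i) * s)" for s
      by (simp add: algebra_simps)
    moreover have "t * real (v i) - of_int (round (t * real (v i))) = \<sigma> * A"
      using False one_sided i by blast
    ultimately show ?thesis
      using i pos assms(3-5) by (simp add: eventually_dist_int_gt_shift)
  qed
  then have "\<forall>\<^sub>F s in at_right 0. A < runner_min_dist m v (t + \<sigma> * s)"
    unfolding less_runner_min_dist_iff[OF m] by (intro eventually_ball_finite) auto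
  then show ?thesis using eventually_happens'[OF trivial_limit_at_right_real] by blast
qed

lemma maximizer_pair_sum_Ints:
  assumes m: "m \<ge> 1" and pos: "\<forall>i\<in>{1..m}. 0 < v i"
    and max: "runner_min_dist m v t = lonely_ML m v"
  shows "\<exists>i\<in>{1..m}. \<exists>j\<in>{1..m}. t * (real (v i) + real (v j)) \<in> \<int>"
proof -
  define A where "A = lonely_ML m v"
  define e where "e i = t * real (v i) - of_int (round (t * real (v i)))" for i
  have dist_e: "dist_int (t * real (v i)) = \<bar>e i\<bar>" for i
    unfolding dist_int_def e_def ..
  have tight: "A \<le> \<bar>e i\<bar>" if "i \<in> {1..m}" for i
    using runner_min_dist_le[OF that, of v t] max dist_e unfolding A_def by simp
  have A_nonneg: "0 \<le> A" and A_le_half: "A \<le> 1/2"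
    using runner_min_dist_nonneg[OF m] runner_min_dist_le_half[OF m] max unfolding A_def by metis+
  have "\<exists>i\<in>{1..m}. \<exists>j\<in>{1..m}. e i + e j \<in> \<int>"
  proof (rule ccontr)
    assume no_pair: "\<not> (\<exists>i\<in>{1..m}. \<exists>j\<in>{1..m}. e i + e j \<in> \<int>)"
    have one: "1 \<in> {1..m}" using m by simp
    have "A < 1/2"
    proof (rule ccontr)
      assume "\<not> A < 1/2"
      then have "\<bar>e 1\<bar> = 1/2"
        using tight[OF one] A_le_half dist_int_le_half[of "t * real (v 1)"] dist_e[of 1] by linarith
      then have "e 1 + e 1 = 1 \<or> e 1 + e 1 = -1" by linarith
      then have "e 1 + e 1 \<in> \<int>" by (metis Ints_1 Ints_minus)
      with no_pair one show False by blast
    qed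
    moreover obtain \<sigma> :: real where "\<bar>\<sigma>\<bar> = 1" "\<forall>i\<in>{1..m}. A < \<bar>e i\<bar> \<or> e i = \<sigma> * A"
    proof (cases "\<exists>i\<in>{1..m}. e i = A")
      case True
      then have "\<forall>j\<in>{1..m}. e j \<noteq> -A" using no_pair by force
      then show thesis using that[of 1] tight by force
    next
      case False
      then show thesis using that[of "-1"] tight by force
    qed
    ultimately obtain t' where "A < runner_min_dist m v t'"
      using exists_runner_min_dist_gt[OF m pos A_nonneg] dist_e unfolding e_def by metis
    with runner_min_dist_le_lonely_ML[OF m] show False unfolding A_def by (simp add: not_less[symmetric])
  qed
  moreover have "t * (real (v i) + real (v j)) =
      e i + e j + of_int (round (t * real (v i)) + round (t * real (v j)))" for i j
    unfolding e_def by (simp add: algebra_simps)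
  ultimately show ?thesis by (metis Ints_add Ints_of_int)
qed

lemma maximizer_mult_pair_prod_Ints:
  assumes "m \<ge> 1" "\<forall>i\<in>{1..m}. 0 < v i" "runner_min_dist m v t = lonely_ML m v"
  shows "t * real (\<Prod>i\<in>{1..m}. \<Prod>j\<in>{1..m}. v i + v j) \<in> \<int>"
proof -
  obtain i j where ij: "i \<in> {1..m}" "j \<in> {1..m}" "t * (real (v i) + real (v j)) \<in> \<int>"
    using maximizer_pair_sum_Ints[OF assms] by blast
  have "v i + v j dvd (\<Prod>j\<in>{1..m}. v i + v j)" using ij by (intro dvd_prodI) auto
  also have "\<dots> dvd (\<Prod>i\<in>{1..m}. \<Prod>j\<in>{1..m}. v i + v j)" using ij by (intro dvd_prodI) auto
  finally obtain q where "(\<Prod>i\<in>{1..m}. \<Prod>j\<in>{1..m}. v i + v j) = (v i + v j) * q" ..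
  then have "t * real (\<Prod>i\<in>{1..m}. \<Prod>j\<in>{1..m}. v i + v j) = t * (real (v i) + real (v j)) * real q"
    by simp
  also have "\<dots> \<in> \<int>" by (rule Ints_mult[OF ij(3)]) simp
  finally show ?thesis .
qed

lemma lonely_ML_add_runner_less:
  assumes m: "m \<ge> 1" and pos: "\<forall>i\<in>{1..m}. 0 < v i"
    and hits_origin: "\<And>t. runner_min_dist m v t = lonely_ML m v \<Longrightarrow> t * real w \<in> \<int>"
  shows "lonely_ML (Suc m) (v(Suc m := w)) < lonely_ML m v"
proof -
  obtain t where t: "runner_min_dist (Suc m) (v(Suc m := w)) t = lonely_ML (Suc m) (v(Suc m := w))"
    using lonely_ML_attained[of "Suc m"] by auto
  show ?thesis
  proof (cases "runner_min_dist m v t = lonely_ML m v")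
    case True
    then obtain k where "t * real w = of_int k" using hits_origin by (metis Ints_cases)
    then show ?thesis
      using t lonely_ML_pos[OF m pos] by (simp add: runner_min_dist_Suc[OF m] dist_int_of_int)
  next
    case False
    then have "runner_min_dist m v t < lonely_ML m v"
      using runner_min_dist_le_lonely_ML[OF m] by (simp add: order_less_le)
    then show ?thesis using t by (simp add: runner_min_dist_Suc[OF m])
  qed
qed

lemma lonely_ML_add_runner_ge:
  assumes m: "m \<ge> 1" and w: "w > 0"
  shows "lonely_ML m v - (\<Sum>i\<in>{1..m}. real (v i)) / real w \<le> lonely_ML (Suc m) (v(Suc m := w))"
proof -
  define L where "L = (\<Sum>i\<in>{1..m}. real (v i))"
  obtain t0 where t0: "runner_min_dist m v t0 = lonely_ML m v"
    using lonely_ML_attained[OF m] by auto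
  define t where "t = (of_int \<lfloor>t0 * real w\<rfloor> + 1/2) / real w"
  have tw: "t * real w = of_int \<lfloor>t0 * real w\<rfloor> + 1/2" unfolding t_def using w by simp
  then have half: "dist_int (t * real w) = 1/2"
    by (subst dist_int_eqI[of _ "\<lfloor>t0 * real w\<rfloor>"]) auto
  have "\<bar>t - t0\<bar> * real w = \<bar>t * real w - t0 * real w\<bar>"
    using w by (simp add: abs_mult flip: left_diff_distrib)
  also have "\<dots> \<le> 1" unfolding tw using floor_correct[of "t0 * real w"] by linarith
  finally have "\<bar>t0 - t\<bar> \<le> 1 / real w"
    using w by (simp add: field_simps abs_minus_commute)
  from mult_left_mono[OF this, of L] have "L * \<bar>t0 - t\<bar> \<le> L / real w"
    by (simp add: L_def sum_nonneg)
  moreover have "runner_min_dist m v t0 - runner_min_dist m v t \<le> L * \<bar>t0 - t\<bar>"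
    using lipschitz_onD[OF lipschitz_runner_min_dist[OF m], of t0 t v] unfolding L_def dist_real_def
    by simp
  ultimately have "lonely_ML m v - L / real w \<le> runner_min_dist m v t"
    using t0 by linarith
  moreover have "lonely_ML m v \<le> 1/2"
    using t0 runner_min_dist_le_half[OF m] by metis
  moreover have "0 \<le> L / real w" by (simp add: L_def sum_nonneg)
  ultimately have "lonely_ML m v - L / real w \<le> runner_min_dist (Suc m) (v(Suc m := w)) t"
    unfolding runner_min_dist_Suc[OF m] half by linarith
  also have "\<dots> \<le> lonely_ML (Suc m) (v(Suc m := w))"
    by (rule runner_min_dist_le_lonely_ML) simp
  finally show ?thesis unfolding L_def .
qed

lemma lonely_ML_add_runner_multiple:
  fixes m k :: nat and v :: "nat \<Rightarrow> nat"
  defines "D \<equiv> \<Prod>i\<in>{1..m}. \<Prod>j\<in>{1..m}. v i + v j"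
  assumes m: "m \<ge> 1" and pos: "\<forall>i\<in>{1..m}. 0 < v i" and k: "k > 0"
  shows "lonely_ML (Suc m) (v(Suc m := k * D)) < lonely_ML m v"
    and "lonely_ML m v - (\<Sum>i\<in>{1..m}. real (v i)) / real k \<le> lonely_ML (Suc m) (v(Suc m := k * D))"
proof -
  have "D > 0" unfolding D_def using pos by (intro prod_pos) auto
  have "t * real (k * D) \<in> \<int>" if "runner_min_dist m v t = lonely_ML m v" for t
  proof -
    have "t * real (k * D) = t * real D * real k" by (simp add: algebra_simps)
    then show ?thesis
      using maximizer_mult_pair_prod_Ints[OF m pos that] unfolding D_def[symmetric]
      by (metis Ints_mult Ints_of_nat)
  qed
  then show "lonely_ML (Suc m) (v(Suc m := k * D)) < lonely_ML m v"
    by (rule lonely_ML_add_runner_less[OF m pos])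
  have kD: "0 < k * D" "real k \<le> real (k * D)"
    using \<open>D > 0\<close> k mult_le_mono2[of 1 D k] by (simp, simp only: of_nat_le_iff, simp)
  then have "(\<Sum>i\<in>{1..m}. real (v i)) / real (k * D) \<le> (\<Sum>i\<in>{1..m}. real (v i)) / real k"
    using k by (intro divide_left_mono) (auto simp: sum_nonneg)
  then show "lonely_ML m v - (\<Sum>i\<in>{1..m}. real (v i)) / real k \<le> lonely_ML (Suc m) (v(Suc m := k * D))"
    using lonely_ML_add_runner_ge[OF m kD(1), of v] by linarith
qed

lemma lower_acc_pointI:
  assumes "\<And>k. x k \<in> S n" "\<And>k. x k < A" "\<And>k. A - c / real (Suc k) \<le> x k"
  shows "lower_acc_point n A"
proof -
  have "(\<lambda>k. A - c / real (Suc k)) \<longlonglongrightarrow> A - 0"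
    by (intro tendsto_intros LIMSEQ_Suc[OF lim_const_over_n])
  then have "(\<lambda>k. A - c / real (Suc k)) \<longlonglongrightarrow> A" by simp
  then have "x \<longlonglongrightarrow> A"
    by (rule tendsto_sandwich[rotated 2, OF _ tendsto_const])
      (intro always_eventually allI assms(3) less_imp_le[OF assms(2)])+
  then show ?thesis unfolding lower_acc_point_def using assms(1,2) by blast
qed

theorem theorem9p5:
  fixes n :: nat
  assumes "n \<ge> 2"
  shows "S (n - 1) \<subseteq> {A. lower_acc_point n A}"
proof
  fix A assume "A \<in> S (n - 1)"
  moreover define m where "m = n - 1"
  ultimately obtain v where A: "A = lonely_ML m v" and pos: "\<forall>i\<in>{1..m}. 0 < v i"
    unfolding S_def by blast
  have m: "m \<ge> 1" and n: "n = Suc m"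
    using assms unfolding m_def by auto
  define D where "D = (\<Prod>i\<in>{1..m}. \<Prod>j\<in>{1..m}. v i + v j)"
  have "D > 0" unfolding D_def using pos by (intro prod_pos) auto
  show "A \<in> {A. lower_acc_point n A}"
  proof (intro CollectI lower_acc_pointI[where c = "\<Sum>i\<in>{1..m}. real (v i)"])
    fix k
    show "lonely_ML n (v(n := Suc k * D)) \<in> S n"
      unfolding S_def n using pos \<open>D > 0\<close> by auto
    show "lonely_ML n (v(n := Suc k * D)) < A"
      and "A - (\<Sum>i\<in>{1..m}. real (v i)) / real (Suc k) \<le> lonely_ML n (v(n := Suc k * D))"
      using lonely_ML_add_runner_multiple[OF m pos, of "Suc k"] unfolding A n D_def by simp_all
  qed
qed

end
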